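(* Let $n$ be a positive integer, let $X=\{(x,y)\in\mathbb{Z}^2 : \max(|x|,|y|) = n\}$ (the boundary of the digital square $[-n,n]_{\mathbb{Z}}^2$), and let $Y = X\setminus\{(n,n)\}$. Let $d=d_1$ be the Manhattan metric $d_1((x_1,x_2),(y_1,y_2))=|x_1-y_1|+|x_2-y_2|$ and $\kappa=c_1$. Then $H_1(X,Y)=1$ and $\delta_{d}(X,Y)\ge 2n-1$.
   Context: $[a,b]_{\mathbb{Z}}$ denotes $\{k\in\mathbb{Z}: a\le k\le b\}$. In $\mathbb{Z}^2$, two distinct points are $c_1$-adjacent if they differ by exactly $1$ in exactly one coordinate and agree in the other (4-adjacency). A function $f$ between subsets of $\mathbb{Z}^2$ is $c_1$-continuous if whenever $x,x'$ are $c_1$-adjacent, $f(x)$ and $f(x')$ are equal or $c_1$-adjacent. $H_1$ is the Hausdorff metric based on $d_1$: for nonempty finite $A,B$, $H_1(A,B)=\min\{\varepsilon\ge0 : \forall a\in A\ \exists b\in B,\ d_1(a,b)\le\varepsilon,\ \text{and}\ \forall b\in B\ \exists a\in A,\ d_1(a,b)\le\varepsilon\}$. Borsuk's metric of continuity $\delta_d(X,Y)$ is the greatest lower bound of the numbers $t>0$ such that there exist $c_1$-continuous maps $f:X\to Y$ and $g:Y\to X$ with $d(x,f(x))\le t$ for all $x\in X$ and $d(y,g(y))\le t$ for all $y\in Y$. *)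

theory Defs
  imports "HOL-Analysis.Analysis"
begin

type_synonym pt = "int \<times> int"

definition d1 :: "pt \<Rightarrow> pt \<Rightarrow> int" where
  "d1 p q = \<bar>fst p - fst q\<bar> + \<bar>snd p - snd q\<bar>"

definition c1_adj :: "pt \<Rightarrow> pt \<Rightarrow> bool" where
  "c1_adj p q \<longleftrightarrow> p \<noteq> q \<and>
     ((fst p = fst q \<and> \<bar>snd p - snd q\<bar> = 1) \<or> (snd p = snd q \<and> \<bar>fst p - fst q\<bar> = 1))"

definition c1_continuous :: "pt set \<Rightarrow> pt set \<Rightarrow> (pt \<Rightarrow> pt) \<Rightarrow> bool" where
  "c1_continuous X Y f \<longleftrightarrow> f ` X \<subseteq> Y \<and>
     (\<forall>x\<in>X. \<forall>x'\<in>X. c1_adj x x' \<longrightarrow> f x = f x' \<or> c1_adj (f x) (f x'))"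

definition hausdorff1 :: "pt set \<Rightarrow> pt set \<Rightarrow> real" where
  "hausdorff1 A B = Inf {\<epsilon>::real. \<epsilon> \<ge> 0 \<and>
      (\<forall>a\<in>A. \<exists>b\<in>B. real_of_int (d1 a b) \<le> \<epsilon>) \<and>
      (\<forall>b\<in>B. \<exists>a\<in>A. real_of_int (d1 a b) \<le> \<epsilon>)}"

definition borsuk_delta1 :: "pt set \<Rightarrow> pt set \<Rightarrow> real" where
  "borsuk_delta1 X Y = Inf {t::real. t > 0 \<and>
      (\<exists>f g. c1_continuous X Y f \<and> c1_continuous Y X g \<and>
         (\<forall>x\<in>X. real_of_int (d1 x (f x)) \<le> t) \<and>
         (\<forall>y\<in>Y. real_of_int (d1 y (g y)) \<le> t))}"

definition digital_square_boundary :: "int \<Rightarrow> pt set" where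
  "digital_square_boundary n = {p. max \<bar>fst p\<bar> \<bar>snd p\<bar> = n}"

end

(*
  The boundary of the square is a digital circle of length 8n, walked by arc length from the
  corner (n, n).  Deleting the corner cuts the circle open, so a c1-continuous map
  f : X \<rightarrow> Y lifts to an integer function h with |h (i + 1) - h i| \<le> 1 and
  f (walk i) = walk (h i).  As h is 8n-periodic, the displacement h i - i decreases by exactly 8n
  over one period in steps of at most 2, so it meets 4n or 4n - 1 modulo 8n: some point is sent
  to within one step of its antipode, at d1-distance at least 2n - 1.  The Hausdorff distance is
  1 because the only missing point, the corner, has a neighbour in Y.
*)
theory Submission
  imports Defs
begin

lemma d1_self [simp]: "d1 p p = 0"
  by (simp add: d1_def)

lemma d1_commute: "d1 p q = d1 q p"
  by (simp add: d1_def abs_minus_commute)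

lemma d1_triangle: "d1 p r \<le> d1 p q + d1 q r"
  unfolding d1_def by linarith

lemma d1_c1_adj: "c1_adj p q \<Longrightarrow> d1 p q = 1"
  by (auto simp: c1_adj_def d1_def)

lemma d1_pos: "p \<noteq> q \<Longrightarrow> 1 \<le> d1 p q"
  by (cases p; cases q) (auto simp: d1_def)

lemma d1_antipode:
  "p \<in> digital_square_boundary n \<Longrightarrow> 2*n \<le> d1 p (- fst p, - snd p)"
  by (auto simp: d1_def digital_square_boundary_def max_def split: if_splits)

lemma hausdorff1_remove_point:
  assumes "p \<in> X" "q \<in> X" "c1_adj p q"
  shows "hausdorff1 X (X - {p}) = 1"
  unfolding hausdorff1_def
proof (rule cInf_eq_minimum)
  have q: "q \<in> X - {p}" "d1 p q = 1"
    using assms d1_c1_adj by (auto simp: c1_adj_def)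
  show "1 \<in> {\<epsilon>. 0 \<le> \<epsilon> \<and> (\<forall>a\<in>X. \<exists>b\<in>X - {p}. real_of_int (d1 a b) \<le> \<epsilon>) \<and>
      (\<forall>b\<in>X - {p}. \<exists>a\<in>X. real_of_int (d1 a b) \<le> \<epsilon>)}"
  proof (intro CollectI conjI ballI)
    fix a assume "a \<in> X"
    show "\<exists>b\<in>X - {p}. real_of_int (d1 a b) \<le> 1"
    proof (cases "a = p")
      case True
      then show ?thesis using q by (intro bexI[of _ q]) auto
    next
      case False
      then show ?thesis using \<open>a \<in> X\<close> by (intro bexI[of _ a]) auto
    qed
  next
    fix b assume "b \<in> X - {p}"
    then show "\<exists>a\<in>X. real_of_int (d1 a b) \<le> 1" by (intro bexI[of _ b]) auto
  qed simp
next
  fix \<epsilon> assume "\<epsilon> \<in> {\<epsilon>. 0 \<le> \<epsilon> \<and> (\<forall>a\<in>X. \<exists>b\<in>X - {p}. real_of_int (d1 a b) \<le> \<epsilon>) \<and>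
      (\<forall>b\<in>X - {p}. \<exists>a\<in>X. real_of_int (d1 a b) \<le> \<epsilon>)}"
  then obtain b where b: "b \<in> X - {p}" and "real_of_int (d1 p b) \<le> \<epsilon>"
    using assms(1) by (simp only: mem_Collect_eq) blast
  moreover have "1 \<le> d1 p b" using b d1_pos[of p b] by auto
  ultimately show "1 \<le> \<epsilon>" by linarith
qed

lemma c1_continuous_const: "y \<in> Y \<Longrightarrow> c1_continuous X Y (\<lambda>_. y)"
  by (auto simp: c1_continuous_def)

lemma borsuk_delta1_ge:
  assumes "finite X" "finite Y" "x0 \<in> X" "y0 \<in> Y"
    and displaced: "\<And>f. c1_continuous X Y f \<Longrightarrow> \<exists>x\<in>X. r \<le> d1 x (f x)"
  shows "real_of_int r \<le> borsuk_delta1 X Y"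
proof -
  let ?T = "{t. 0 < t \<and> (\<exists>f g. c1_continuous X Y f \<and> c1_continuous Y X g \<and>
      (\<forall>x\<in>X. real_of_int (d1 x (f x)) \<le> t) \<and> (\<forall>y\<in>Y. real_of_int (d1 y (g y)) \<le> t))}"
  define M where "M = Max ((\<lambda>(x, y). d1 x y) ` (X \<times> Y))"
  have M: "d1 x y \<le> M" if "x \<in> X" "y \<in> Y" for x y
    unfolding M_def using assms(1,2) that by (intro Max_ge) auto
  have "max 1 (real_of_int M) \<in> ?T"
  proof (intro CollectI conjI exI)
    show "c1_continuous X Y (\<lambda>_. y0)" "c1_continuous Y X (\<lambda>_. x0)"
      using assms(3,4) by (simp_all add: c1_continuous_const)
    show "\<forall>x\<in>X. real_of_int (d1 x y0) \<le> max 1 (real_of_int M)"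
      using M assms(4) by (simp add: le_max_iff_disj)
    show "\<forall>y\<in>Y. real_of_int (d1 y x0) \<le> max 1 (real_of_int M)"
      using M[of x0] assms(3) by (simp add: le_max_iff_disj d1_commute[of _ x0])
  qed simp
  moreover have "real_of_int r \<le> t" if t: "t \<in> ?T" for t
  proof -
    obtain f where "c1_continuous X Y f" "\<forall>x\<in>X. real_of_int (d1 x (f x)) \<le> t"
      using t by blast
    then show ?thesis using displaced by force
  qed
  ultimately show ?thesis
    unfolding borsuk_delta1_def by (intro cInf_greatest) auto
qed

(* Clockwise from the corner (n, n); the arguments 0 and 8n both give that corner. *)
definition square_walk :: "int \<Rightarrow> int \<Rightarrow> pt" where
  "square_walk n k =
     (if k \<le> 2*n then (n, n - k) else if k \<le> 4*n then (3*n - k, -n)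
      else if k \<le> 6*n then (-n, k - 5*n) else (k - 7*n, n))"

definition square_loop :: "int \<Rightarrow> int \<Rightarrow> pt" where
  "square_loop n i = square_walk n (i mod (8*n))"

definition square_index :: "int \<Rightarrow> pt \<Rightarrow> int" where
  "square_index n p =
     (if fst p = n \<and> snd p > -n then n - snd p
      else if snd p = -n \<and> fst p > -n then 3*n - fst p
      else if fst p = -n \<and> snd p < n then snd p + 5*n
      else fst p + 7*n)"

lemma square_walk_in_boundary:
  "0 < n \<Longrightarrow> 0 \<le> k \<Longrightarrow> k \<le> 8*n \<Longrightarrow> square_walk n k \<in> digital_square_boundary n"
  by (auto simp: square_walk_def digital_square_boundary_def)

lemma square_walk_period: "0 < n \<Longrightarrow> square_walk n (8*n) = square_walk n 0"
  by (simp add: square_walk_def)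

lemma c1_adj_square_walk:
  "0 < n \<Longrightarrow> 0 \<le> k \<Longrightarrow> k < 8*n \<Longrightarrow> c1_adj (square_walk n k) (square_walk n (k + 1))"
  by (auto simp: square_walk_def c1_adj_def)

lemma square_index_inverse:
  assumes "0 < n" "p \<in> digital_square_boundary n"
  shows "0 \<le> square_index n p \<and> square_index n p < 8*n \<and> square_walk n (square_index n p) = p"
  using assms by (cases p) (simp add: square_index_def square_walk_def digital_square_boundary_def
      abs_if max_def split: if_splits; arith)

(* Removing the corner is essential: at (n, n) the index jumps between 8n - 1 and 0. *)
lemma square_index_c1_adj:
  assumes "0 < n" "p \<in> digital_square_boundary n - {(n, n)}" "q \<in> digital_square_boundary n - {(n, n)}"
    and "c1_adj p q"
  shows "\<bar>square_index n p - square_index n q\<bar> = 1"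
  using assms by (cases p; cases q) (simp add: square_index_def c1_adj_def digital_square_boundary_def
      abs_if max_def split: if_splits; arith)

lemma square_loop_add_period [simp]: "square_loop n (i + 8*n*k) = square_loop n i"
  by (simp add: square_loop_def)

lemma square_loop_eq_walk:
  assumes "0 < n" "0 \<le> k" "k \<le> 8*n"
  shows "square_loop n k = square_walk n k"
proof (cases "k = 8*n")
  case True
  then show ?thesis using assms by (simp add: square_loop_def square_walk_period)
next
  case False
  then show ?thesis using assms by (simp add: square_loop_def)
qed

lemma square_loop_in_boundary: "0 < n \<Longrightarrow> square_loop n i \<in> digital_square_boundary n"
  unfolding square_loop_def by (intro square_walk_in_boundary) (simp_all add: order_less_imp_le)

lemma square_loop_index:
  "0 < n \<Longrightarrow> p \<in> digital_square_boundary n \<Longrightarrow> square_loop n (square_index n p) = p"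
  using square_index_inverse[of n p] square_loop_eq_walk[of n "square_index n p"] by auto

lemma c1_adj_square_loop:
  assumes "0 < n"
  shows "c1_adj (square_loop n i) (square_loop n (i + 1))"
proof -
  define k where "k = i mod (8*n)"
  have k: "0 \<le> k" "k < 8*n" using assms by (auto simp: k_def)
  have "square_loop n (i + 1) = square_loop n (k + 1)"
    by (simp add: square_loop_def k_def mod_add_left_eq)
  also have "\<dots> = square_walk n (k + 1)" using assms k by (simp add: square_loop_eq_walk)
  finally show ?thesis
    using c1_adj_square_walk[OF assms k] by (simp add: square_loop_def k_def)
qed

lemma square_loop_add_half:
  assumes "0 < n"
  shows "square_loop n (i + 4*n) = (- fst (square_loop n i), - snd (square_loop n i))"
proof -
  define k where "k = i mod (8*n)"
  have k: "0 \<le> k" "k < 8*n" using assms by (auto simp: k_def)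
  have "square_loop n (i + 4*n) = square_loop n (k + 4*n)"
    by (simp add: square_loop_def k_def mod_add_left_eq)
  also have "\<dots> = square_walk n (if k < 4*n then k + 4*n else k - 4*n)"
  proof (cases "k < 4*n")
    case False
    have "square_loop n (k + 4*n) = square_loop n (k - 4*n)"
      using square_loop_add_period[of n "k - 4*n" 1] by (simp add: algebra_simps)
    then show ?thesis using False k assms by (simp add: square_loop_eq_walk)
  qed (use k assms in \<open>simp add: square_loop_eq_walk\<close>)
  finally show ?thesis
    using k assms by (simp add: square_loop_def k_def[symmetric] square_walk_def)
qed

lemma square_loop_half_turn_dist:
  assumes "0 < n" "c \<in> {0, -1}"
  shows "2*n - 1 \<le> d1 (square_loop n i) (square_loop n (i + 4*n + c))"
proof -
  have far: "2*n \<le> d1 (square_loop n i) (square_loop n (i + 4*n))"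
    using d1_antipode square_loop_in_boundary assms(1) by (simp add: square_loop_add_half)
  have "d1 (square_loop n (i + 4*n + c)) (square_loop n (i + 4*n)) \<le> 1"
    using assms d1_c1_adj[OF c1_adj_square_loop[OF assms(1), of "i + 4*n - 1"]] by auto
  then show ?thesis
    using far d1_triangle[of "square_loop n i" "square_loop n (i + 4*n)" "square_loop n (i + 4*n + c)"]
    by linarith
qed

lemma finite_digital_square_boundary: "finite (digital_square_boundary n)"
proof (rule finite_subset)
  show "digital_square_boundary n \<subseteq> {-n..n} \<times> {-n..n}"
    by (auto simp: digital_square_boundary_def max_def split: if_splits)
qed simp

lemma int_descent_hits_window:
  fixes e :: "int \<Rightarrow> int"
  assumes "a \<le> b" "c - 1 \<le> e a" "e b \<le> c"
    and steps: "\<And>i. a \<le> i \<Longrightarrow> i < b \<Longrightarrow> e i - 2 \<le> e (i + 1)"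
  shows "\<exists>i. a \<le> i \<and> i \<le> b \<and> c - 1 \<le> e i \<and> e i \<le> c"
  using assms
proof (induction b rule: int_ge_induct)
  case base
  then show ?case by auto
next
  case (step b)
  show ?case
  proof (cases "e b \<le> c")
    case True
    then show ?thesis using step by force
  next
    case False
    then show ?thesis using step.prems step.hyps by (intro exI[of _ "b + 1"]) force
  qed
qed

(* h i - i drops by 2m over a period in steps of at most 2, so it cannot jump over the window
   {t - 1, t} of the unique t \<equiv> m (mod 2m) in (h 0 - 2m, h 0]. *)
lemma lipschitz_loop_half_turn:
  fixes h :: "int \<Rightarrow> int" and m :: int
  assumes "0 < m" "h (2*m) = h 0" "\<And>i. \<bar>h (i + 1) - h i\<bar> \<le> 1"
  shows "\<exists>i k c. c \<in> {0, -1} \<and> h i = i + m + c + 2*m*k"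
proof -
  define k where "k = (h 0 - m) div (2*m)"
  define t where "t = m + 2*m*k"
  have "t = h 0 - (h 0 - m) mod (2*m)"
    by (simp add: t_def k_def minus_mod_eq_mult_div [symmetric])
  then have "t \<le> h 0" "h 0 - 2*m < t"
    using assms(1) pos_mod_bound[of "2*m" "h 0 - m"] by auto
  have "\<exists>i. 0 \<le> i \<and> i \<le> 2*m \<and> t - 1 \<le> h i - i \<and> h i - i \<le> t"
  proof (rule int_descent_hits_window[where e = "\<lambda>i. h i - i"])
    show "h i - i - 2 \<le> h (i + 1) - (i + 1)" for i
      using assms(3)[of i] by (simp add: abs_le_iff)
  qed (use \<open>t \<le> h 0\<close> \<open>h 0 - 2*m < t\<close> assms(1,2) in auto)
  then obtain i where "t - 1 \<le> h i - i" "h i - i \<le> t" by blast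
  then show ?thesis
    by (intro exI[of _ i] exI[of _ k] exI[of _ "h i - i - t"]) (auto simp: t_def)
qed

lemma c1_continuous_square_boundary_displacement:
  assumes n: "0 < n"
    and f: "c1_continuous (digital_square_boundary n) (digital_square_boundary n - {(n, n)}) f"
  shows "\<exists>x \<in> digital_square_boundary n. 2*n - 1 \<le> d1 x (f x)"
proof -
  define h where "h i = square_index n (f (square_loop n i))" for i
  have f_loop: "f (square_loop n i) \<in> digital_square_boundary n - {(n, n)}" for i
    using f square_loop_in_boundary[OF n] by (auto simp: c1_continuous_def)
  have lift: "square_loop n (h i) = f (square_loop n i)" for i
    using square_loop_index[OF n] f_loop by (simp add: h_def)
  have "\<bar>h (i + 1) - h i\<bar> \<le> 1" for i
  proof (cases "f (square_loop n i) = f (square_loop n (i + 1))")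
    case False
    then have "c1_adj (f (square_loop n i)) (f (square_loop n (i + 1)))"
      using f c1_adj_square_loop[OF n, of i] square_loop_in_boundary[OF n]
      unfolding c1_continuous_def by blast
    then have "\<bar>h i - h (i + 1)\<bar> = 1"
      using square_index_c1_adj[OF n f_loop f_loop] by (simp add: h_def)
    then show ?thesis by (simp add: abs_minus_commute)
  qed (simp add: h_def)
  moreover have "h (2*(4*n)) = h 0"
    using square_loop_add_period[of n 0 1] by (simp add: h_def)
  ultimately obtain i k c where c: "c \<in> {0, -1}" and "h i = i + 4*n + c + 2*(4*n)*k"
    using lipschitz_loop_half_turn[of "4*n" h] n by auto
  then have "f (square_loop n i) = square_loop n (i + 4*n + c)"
    using lift[of i] square_loop_add_period[of n "i + 4*n + c" k] by (simp add: mult.assoc)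
  then show ?thesis
    using square_loop_half_turn_dist[OF n c, of i] square_loop_in_boundary[OF n] by metis
qed

theorem theorem2p7:
  fixes n :: int and X Y :: "pt set"
  assumes "n > 0"
    and "X = digital_square_boundary n"
    and "Y = X - {(n, n)}"
  shows "hausdorff1 X Y = 1 \<and> borsuk_delta1 X Y \<ge> real_of_int (2 * n - 1)"
proof
  have corner: "(n, n) \<in> X" and neighbour: "(n - 1, n) \<in> Y"
    using assms by (auto simp: digital_square_boundary_def)
  show "hausdorff1 X Y = 1"
    using hausdorff1_remove_point[OF corner] neighbour assms(3) by (simp add: c1_adj_def)
  have "finite X" "finite Y"
    using finite_digital_square_boundary assms(2,3) by auto
  then show "borsuk_delta1 X Y \<ge> real_of_int (2 * n - 1)"
    by (rule borsuk_delta1_ge[OF _ _ corner neighbour])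
      (use c1_continuous_square_boundary_displacement[OF assms(1)] assms(2,3) in auto)
qed

end
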